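(* Let $f=\mathbb{E}_\xi[f_\xi]$ be $L_{f/h}$-relatively smooth with respect to $h$ (no relative strong convexity assumed), with minimizer $x^\star\in\operatorname{int}\operatorname{dom}h$ satisfying $\nabla f(x^\star)=0$, and suppose the noise assumption below holds with constant $\sigma^2$ and step size $\eta\le1/(2L_{f/h})$. Then the iterates of Bregman stochastic gradient descent with constant step size $\eta$ satisfy, for every $T\ge1$, $$\mathbb{E}\Big[\frac1T\sum_{t=0}^{T}D_f(x^\star,x_t)\Big]\le\frac{D_h(x^\star,x_0)}{\eta T}+\eta\sigma^2.$$
   Context: Let $C\subseteq\mathbb{R}^d$ be a closed convex set and $h:\mathbb{R}^d\to\mathbb{R}\cup\{+\infty\}$ a function satisfying the standing assumption: $h$ is twice continuously differentiable and strictly convex on $\operatorname{int} C$, and for every $y\in\mathbb{R}^d$ the problem $\min_{x\in C} h(x)-x^\top y$ has a unique solution, which lies in $\operatorname{int} C$. $h^*$ is the convex conjugate of $h$. For differentiable $\varphi$, $D_\varphi(x,y)=\varphi(x)-\varphi(y)-\nabla\varphi(y)^\top(x-y)$. A differentiable $f$ is $L$-relatively smooth w.r.t. $h$ if $D_f(x,y)\le L D_h(x,y)$ for all $x,y\in\operatorname{int}\operatorname{dom}h$. Bregman stochastic gradient descent (BSGD): given $x_0\in\operatorname{int}C$, $x_{t+1}=\arg\min_{x\in C}\{\eta g_t^\top x+D_h(x,x_t)\}$, equivalently $\nabla h(x_{t+1})=\nabla h(x_t)-\eta g_t$, where $g_t=\nabla f_{\xi_t}(x_t)$ and $\xi_t$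 are drawn independently from the distribution of $\xi$. Noise assumption: every $f_\xi$ is convex and $L_{f/h}$-relatively smooth w.r.t. $h$, $\mathbb{E}_\xi[f_\xi]=f$, and there is $\sigma^2\ge0$ such that for all $t$, $\sigma^2\ge\frac{1}{2\eta^2}\mathbb{E}_{\xi_t}\big[D_{h^*}(\nabla h(x_t)-2\eta\nabla f_{\xi_t}(x^\star),\nabla h(x_t))\big]$. *)

theory Defs
  imports "HOL-Analysis.Analysis" "HOL-Probability.Probability"
begin

definition grad :: "('a::euclidean_space \<Rightarrow> real) \<Rightarrow> 'a \<Rightarrow> 'a" where
  "grad \<phi> y = (SOME g. (\<phi> has_derivative (\<lambda>v. g \<bullet> v)) (at y))"

definition bregman :: "('a::euclidean_space \<Rightarrow> real) \<Rightarrow> 'a \<Rightarrow> 'a \<Rightarrow> real" where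
  "bregman \<phi> x y = \<phi> x - \<phi> y - grad \<phi> y \<bullet> (x - y)"

definition strict_convex_on :: "'a::real_vector set \<Rightarrow> ('a \<Rightarrow> real) \<Rightarrow> bool" where
  "strict_convex_on S f \<longleftrightarrow> (\<forall>x\<in>S. \<forall>y\<in>S. x \<noteq> y \<longrightarrow>
     (\<forall>u::real. 0 < u \<and> u < 1 \<longrightarrow> f ((1 - u) *\<^sub>R x + u *\<^sub>R y) < (1 - u) * f x + u * f y))"

text \<open>Convex conjugate of h, where h is taken to be +infinity outside C
  (so dom h = C): h*(y) = sup over x in C of x.y - h(x).\<close>
definition conj_on :: "'a::euclidean_space set \<Rightarrow> ('a \<Rightarrow> real) \<Rightarrow> 'a \<Rightarrow> real" where
  "conj_on C h y = (SUP x\<in>C. x \<bullet> y - h x)"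

definition rel_smooth :: "'a::euclidean_space set \<Rightarrow> real \<Rightarrow> ('a \<Rightarrow> real) \<Rightarrow> ('a \<Rightarrow> real) \<Rightarrow> bool" where
  "rel_smooth C L f h \<longleftrightarrow> (\<forall>x\<in>interior C. f differentiable (at x)) \<and>
     (\<forall>x\<in>interior C. \<forall>y\<in>interior C. bregman f x y \<le> L * bregman h x y)"

definition bsgd_step :: "'a::euclidean_space set \<Rightarrow> ('a \<Rightarrow> real) \<Rightarrow> real \<Rightarrow> 'a \<Rightarrow> 'a \<Rightarrow> 'a" where
  "bsgd_step C h \<eta> g xt = (THE x. x \<in> C \<and>
     (\<forall>z\<in>C. \<eta> * (g \<bullet> x) + bregman h x xt \<le> \<eta> * (g \<bullet> z) + bregman h z xt))"

text \<open>BSGD iterates along a sample path \<omega> (\<omega> t = \<xi>_t), g_t = grad f_{\<xi>_t}(x_t).\<close>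
fun bsgd :: "'a::euclidean_space set \<Rightarrow> ('a \<Rightarrow> real) \<Rightarrow> real \<Rightarrow> ('b \<Rightarrow> 'a \<Rightarrow> real) \<Rightarrow> 'a
             \<Rightarrow> (nat \<Rightarrow> 'b) \<Rightarrow> nat \<Rightarrow> 'a" where
  "bsgd C h \<eta> fx x0 \<omega> 0 = x0"
| "bsgd C h \<eta> fx x0 \<omega> (Suc t) =
     bsgd_step C h \<eta> (grad (fx (\<omega> t)) (bsgd C h \<eta> fx x0 \<omega> t)) (bsgd C h \<eta> fx x0 \<omega> t)"

end

theory Submission
  imports Defs
begin

text \<open>
  One mirror step x \<mapsto> x' with stochastic gradient g = \<nabla>f_\<xi>(x) satisfies the three-point
  identity \<eta>\<langle>g, x - x*\<rangle> = D_h(x*,x) - D_h(x*,x') + D_h(x,x'), and by duality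
  D_h(x,x') = D_h*(\<nabla>h(x) - \<eta>g, \<nabla>h(x)). Writing \<eta>g as the midpoint of 2\<eta>(g - \<nabla>f_\<xi>(x*))
  and 2\<eta>\<nabla>f_\<xi>(x*), convexity of h* splits this term into a part that relative smoothness
  and \<eta> \<le> 1/(2L) bound by \<eta>D_f_\<xi>(x,x*), and half the noise term. Averaging over \<xi>, which
  turns \<nabla>f_\<xi>(x*) into \<nabla>f(x*) = 0, gives
    \<eta>D_f(x*,x) + E D_h(x*,x') \<le> D_h(x*,x) + \<eta>^2 \<sigma>^2,
  which telescopes along the trajectory. The iterates need not be measurable functions of the
  sample path, so expectations over it are lower Lebesgue integrals, which are estimated
  through their measurable minorants.
\<close>

section \<open>Gradients and Bregman divergences\<close>

lemma has_derivative_grad: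
  fixes \<phi> :: "'a::euclidean_space \<Rightarrow> real"
  assumes "\<phi> differentiable (at x)"
  shows "(\<phi> has_derivative (\<lambda>v. grad \<phi> x \<bullet> v)) (at x)"
proof -
  obtain D where D: "(\<phi> has_derivative D) (at x)"
    using assms by (auto simp: differentiable_def)
  have "D v = v \<bullet> adjoint D 1" for v
    using adjoint_works[OF has_derivative_linear[OF D], of v 1] by simp
  with D have "\<exists>g. (\<phi> has_derivative (\<lambda>v. g \<bullet> v)) (at x)"
    by (metis (no_types, lifting) ext inner_commute)
  then show ?thesis
    unfolding grad_def by (rule someI_ex)
qed

lemma grad_eqI:
  fixes \<phi> :: "'a::euclidean_space \<Rightarrow> real"
  assumes "(\<phi> has_derivative (\<lambda>v. g \<bullet> v)) (at x)"
  shows "grad \<phi> x = g"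
proof -
  have "\<phi> differentiable (at x)"
    using assms by (auto simp: differentiable_def)
  then have "(\<lambda>v. grad \<phi> x \<bullet> v) = (\<lambda>v. g \<bullet> v)"
    using has_derivative_unique[OF has_derivative_grad assms] by blast
  then have "(grad \<phi> x - g) \<bullet> (grad \<phi> x - g) = 0"
    by (metis inner_diff_left right_minus_eq)
  then show ?thesis
    by simp
qed

lemma difference_quotient_tendsto:
  fixes \<phi> :: "'a::euclidean_space \<Rightarrow> real"
  assumes "(\<phi> has_derivative (\<lambda>v. g \<bullet> v)) (at x)"
  shows "((\<lambda>s. (\<phi> (x + s *\<^sub>R d) - \<phi> x) / s) \<longlongrightarrow> g \<bullet> d) (at 0)"
proof -
  have line: "((\<lambda>s::real. x + s *\<^sub>R d) has_derivative (\<lambda>s. s *\<^sub>R d)) (at 0)"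
    by (auto intro!: derivative_eq_intros)
  have "((\<lambda>s. \<phi> (x + s *\<^sub>R d)) has_derivative (\<lambda>s. g \<bullet> (s *\<^sub>R d))) (at 0)"
    using has_derivative_compose[OF line, of \<phi> "\<lambda>v. g \<bullet> v"] assms by simp
  then have "((\<lambda>s. \<phi> (x + s *\<^sub>R d)) has_field_derivative (g \<bullet> d)) (at 0)"
    by (simp add: has_field_derivative_def mult.commute[of _ "g \<bullet> d"])
  then show ?thesis
    by (simp add: has_field_derivative_iff)
qed

lemma convex_on_gradient_inequality:
  fixes \<phi> :: "'a::euclidean_space \<Rightarrow> real"
  assumes "convex_on S \<phi>" "convex S" "x \<in> S" "y \<in> S"
    and "(\<phi> has_derivative (\<lambda>v. g \<bullet> v)) (at x)"
  shows "\<phi> x + g \<bullet> (y - x) \<le> \<phi> y"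
proof -
  have "((\<lambda>s. (\<phi> (x + s *\<^sub>R (y - x)) - \<phi> x) / s) \<longlongrightarrow> g \<bullet> (y - x)) (at_right 0)"
    using difference_quotient_tendsto[OF assms(5)] filterlim_at_split by blast
  moreover have "(\<phi> (x + s *\<^sub>R (y - x)) - \<phi> x) / s \<le> \<phi> y - \<phi> x" if "0 < s" "s < 1" for s
  proof -
    have "\<phi> ((1 - s) *\<^sub>R x + s *\<^sub>R y) \<le> (1 - s) * \<phi> x + s * \<phi> y"
      using assms that by (intro convex_onD) auto
    moreover have "x + s *\<^sub>R (y - x) = (1 - s) *\<^sub>R x + s *\<^sub>R y"
      by (simp add: algebra_simps)
    ultimately have "\<phi> (x + s *\<^sub>R (y - x)) - \<phi> x \<le> (\<phi> y - \<phi> x) * s"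
      by (simp add: algebra_simps)
    then show ?thesis
      using that by (simp add: pos_divide_le_eq)
  qed
  then have "eventually (\<lambda>s. (\<phi> (x + s *\<^sub>R (y - x)) - \<phi> x) / s \<le> \<phi> y - \<phi> x) (at_right 0)"
    unfolding eventually_at_right_field by (intro exI[of _ 1]) auto
  ultimately have "g \<bullet> (y - x) \<le> \<phi> y - \<phi> x"
    by (rule tendsto_upperbound) simp
  then show ?thesis
    by simp
qed

lemma bregman_nonneg:
  fixes \<phi> :: "'a::euclidean_space \<Rightarrow> real"
  assumes "convex_on S \<phi>" "convex S" "x \<in> S" "y \<in> S" "\<phi> differentiable (at y)"
  shows "bregman \<phi> x y \<ge> 0"
  using convex_on_gradient_inequality[OF assms(1-2,4,3) has_derivative_grad[OF assms(5)]]
  by (simp add: bregman_def)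

lemma bregman_same [simp]: "bregman \<phi> x x = 0"
  by (simp add: bregman_def)

lemma bregman_three_point:
  "bregman \<phi> a c = bregman \<phi> a b + bregman \<phi> b c + (grad \<phi> b - grad \<phi> c) \<bullet> (a - b)"
  by (simp add: bregman_def algebra_simps)

lemma convex_on_difference_quotient_bounds:
  fixes \<phi> :: "'a::euclidean_space \<Rightarrow> real"
  assumes cvx: "convex_on S \<phi>" "convex S" and w: "w \<in> S"
    and der: "(\<phi> has_derivative (\<lambda>v. g \<bullet> v)) (at w)"
    and s: "0 < s" "s \<le> r" and r: "w + r *\<^sub>R d \<in> S" "w - r *\<^sub>R d \<in> S"
  shows "(\<phi> w - \<phi> (w - r *\<^sub>R d)) / r \<le> g \<bullet> d"
    and "g \<bullet> d \<le> (\<phi> (w + s *\<^sub>R d) - \<phi> w) / s"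
    and "(\<phi> (w + s *\<^sub>R d) - \<phi> w) / s \<le> (\<phi> (w + r *\<^sub>R d) - \<phi> w) / r"
proof -
  define t where "t = s / r"
  have t: "0 \<le> t" "t \<le> 1"
    using s unfolding t_def by auto
  have ws: "w + s *\<^sub>R d = (1 - t) *\<^sub>R w + t *\<^sub>R (w + r *\<^sub>R d)"
    using s unfolding t_def by (simp add: algebra_simps)
  then have "w + s *\<^sub>R d \<in> S"
    using cvx(2) w r t by (simp add: convexD_alt)
  show "(\<phi> w - \<phi> (w - r *\<^sub>R d)) / r \<le> g \<bullet> d"
    using convex_on_gradient_inequality[OF cvx w r(2) der] s by (simp add: divide_le_eq algebra_simps)
  show "g \<bullet> d \<le> (\<phi> (w + s *\<^sub>R d) - \<phi> w) / s"
    using convex_on_gradient_inequality[OF cvx w \<open>w + s *\<^sub>R d \<in> S\<close> der] s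
    by (simp add: le_divide_eq algebra_simps)
  have "\<phi> (w + s *\<^sub>R d) \<le> (1 - t) * \<phi> w + t * \<phi> (w + r *\<^sub>R d)"
    unfolding ws using cvx w r t by (intro convex_onD) auto
  then have "\<phi> (w + s *\<^sub>R d) - \<phi> w \<le> s / r * (\<phi> (w + r *\<^sub>R d) - \<phi> w)"
    unfolding t_def by (simp add: algebra_simps)
  then show "(\<phi> (w + s *\<^sub>R d) - \<phi> w) / s \<le> (\<phi> (w + r *\<^sub>R d) - \<phi> w) / r"
    using s by (simp add: divide_le_eq field_simps)
qed

text \<open>Differentiation under the integral sign for convex integrands: the difference quotients
  are monotone in the step, hence dominated by the integrable quotients at a fixed step.\<close>
lemma integral_grad_inner:
  fixes F :: "'b \<Rightarrow> 'a::euclidean_space \<Rightarrow> real"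
  assumes S: "open S" "convex S" and w: "w \<in> S"
    and F_convex: "\<And>\<xi>. \<xi> \<in> space P \<Longrightarrow> convex_on S (F \<xi>)"
    and F_diff: "\<And>\<xi>. \<xi> \<in> space P \<Longrightarrow> F \<xi> differentiable (at w)"
    and F_int: "\<And>x. x \<in> S \<Longrightarrow> integrable P (\<lambda>\<xi>. F \<xi> x)"
    and f_mean: "\<And>x. x \<in> S \<Longrightarrow> f x = (\<integral>\<xi>. F \<xi> x \<partial>P)"
    and f_diff: "f differentiable (at w)"
  shows "integrable P (\<lambda>\<xi>. grad (F \<xi>) w \<bullet> d) \<and> (\<integral>\<xi>. grad (F \<xi>) w \<bullet> d \<partial>P) = grad f w \<bullet> d"
proof (cases "d = 0")
  case False
  obtain e where e: "e > 0" "ball w e \<subseteq> S"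
    using S w openE by blast
  define r where "r = e / (2 * norm d)"
  have r: "r > 0" "w + r *\<^sub>R d \<in> S" "w - r *\<^sub>R d \<in> S"
    using e False by (auto simp: r_def dist_norm intro!: subsetD[OF e(2)])
  define s where "s n = r / real (Suc n)" for n
  have s: "0 < s n" "s n \<le> r" for n
    using r by (auto simp: s_def divide_le_eq)
  have ws: "w + s n *\<^sub>R d \<in> S" for n
    using S(2) w r s[of n] convexD_alt[of S w "w + r *\<^sub>R d" "s n / r"]
    by (simp add: algebra_simps)
  have "s \<longlonglongrightarrow> 0"
    unfolding s_def using tendsto_mult[OF tendsto_const LIMSEQ_inverse_real_of_nat, of r]
    by (simp add: divide_inverse)
  then have s_lim: "filterlim s (at 0) sequentially"
    using s by (auto simp: filterlim_at less_imp_neq[symmetric])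
  define q where "q n \<xi> = (F \<xi> (w + s n *\<^sub>R d) - F \<xi> w) / s n" for n \<xi>
  define lo where "lo \<xi> = (F \<xi> w - F \<xi> (w - r *\<^sub>R d)) / r" for \<xi>
  define up where "up \<xi> = (F \<xi> (w + r *\<^sub>R d) - F \<xi> w) / r" for \<xi>
  have der: "(F \<xi> has_derivative (\<lambda>v. grad (F \<xi>) w \<bullet> v)) (at w)" if "\<xi> \<in> space P" for \<xi>
    using F_diff[OF that] by (rule has_derivative_grad)
  have bounds: "lo \<xi> \<le> grad (F \<xi>) w \<bullet> d" "grad (F \<xi>) w \<bullet> d \<le> q n \<xi>" "q n \<xi> \<le> up \<xi>"
    if "\<xi> \<in> space P" for \<xi> n
    using convex_on_difference_quotient_bounds[OF F_convex[OF that] S(2) w der[OF that] s r(2-3)]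
    unfolding lo_def q_def up_def by auto
  have q_lim: "(\<lambda>n. q n \<xi>) \<longlonglongrightarrow> grad (F \<xi>) w \<bullet> d" if "\<xi> \<in> space P" for \<xi>
    using filterlim_compose[OF difference_quotient_tendsto[OF der[OF that]] s_lim]
    by (simp add: q_def)
  have q_int: "integrable P (q n)" for n
    unfolding q_def using F_int ws w by auto
  have meas: "(\<lambda>\<xi>. grad (F \<xi>) w \<bullet> d) \<in> borel_measurable P"
    by (rule borel_measurable_LIMSEQ_real[OF q_lim]) (use q_int in auto)
  have dominating: "integrable P (\<lambda>\<xi>. \<bar>lo \<xi>\<bar> + \<bar>up \<xi>\<bar>)"
    unfolding lo_def up_def using F_int w r by auto
  have "norm (q n \<xi>) \<le> \<bar>lo \<xi>\<bar> + \<bar>up \<xi>\<bar>" if "\<xi> \<in> space P" for \<xi> n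
    using bounds(1)[OF that] bounds(2-3)[OF that, of n] by (smt (verit) real_norm_def)
  then have dom: "AE \<xi> in P. norm (q n \<xi>) \<le> \<bar>lo \<xi>\<bar> + \<bar>up \<xi>\<bar>" for n
    by (intro AE_I2)
  have "(\<lambda>n. \<integral>\<xi>. q n \<xi> \<partial>P) \<longlonglongrightarrow> (\<integral>\<xi>. grad (F \<xi>) w \<bullet> d \<partial>P)"
    by (rule integral_dominated_convergence[where s=q, OF meas _ dominating _ dom])
      (use q_int q_lim in auto)
  moreover have "(\<lambda>n. \<integral>\<xi>. q n \<xi> \<partial>P) \<longlonglongrightarrow> grad f w \<bullet> d"
  proof -
    have "(\<integral>\<xi>. q n \<xi> \<partial>P) = (f (w + s n *\<^sub>R d) - f w) / s n" for n
      unfolding q_def using F_int f_mean ws w by simp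
    then show ?thesis
      using filterlim_compose[OF difference_quotient_tendsto[OF has_derivative_grad[OF f_diff]] s_lim]
      by simp
  qed
  moreover have "integrable P (\<lambda>\<xi>. grad (F \<xi>) w \<bullet> d)"
    by (rule integrable_dominated_convergence[where s=q, OF meas _ dominating _ dom])
      (use q_int q_lim in auto)
  ultimately show ?thesis
    using LIMSEQ_unique by blast
qed simp

section \<open>Lower Lebesgue integrals\<close>

lemma nn_integral_le_by_measurable_minorants:
  assumes "\<And>g. g \<in> borel_measurable M \<Longrightarrow> (\<And>x. x \<in> space M \<Longrightarrow> g x \<le> F x) \<Longrightarrow>
      integral\<^sup>N M g \<le> B"
  shows "integral\<^sup>N M F \<le> B"
  unfolding nn_integral_def
proof (rule SUP_least)
  fix g assume "g \<in> {g. simple_function M g \<and> g \<le> F}"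
  then have g: "simple_function M g" "g \<le> F"
    by auto
  then have "integral\<^sup>N M g \<le> B"
    using assms[OF borel_measurable_simple_function] by (auto simp: le_fun_def)
  then show "integral\<^sup>S M g \<le> B"
    using nn_integral_eq_simple_integral[OF g(1)] by simp
qed

lemma (in prob_space) nn_integral_add_const_le:
  "(\<integral>\<^sup>+x. c + F x \<partial>M) \<le> c + integral\<^sup>N M F"
proof (rule nn_integral_le_by_measurable_minorants)
  fix g assume g: "g \<in> borel_measurable M" and le: "\<And>x. x \<in> space M \<Longrightarrow> g x \<le> c + F x"
  show "integral\<^sup>N M g \<le> c + integral\<^sup>N M F"
  proof (cases "c = top")
    case False
    have "g x \<le> c + (g x - c)" for x
    proof (cases "c \<le> g x")
      case True
      then show ?thesis
        by (metis ennreal_ineq_diff_add order_refl)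
    qed (meson add_increasing2 nle_le zero_le)
    then have "integral\<^sup>N M g \<le> (\<integral>\<^sup>+x. c + (g x - c) \<partial>M)"
      by (intro nn_integral_mono)
    also have "\<dots> = c + (\<integral>\<^sup>+x. g x - c \<partial>M)"
      using g by (simp add: nn_integral_add emeasure_space_1)
    also have "(\<integral>\<^sup>+x. g x - c \<partial>M) \<le> integral\<^sup>N M F"
      using le False by (intro nn_integral_mono) (simp add: ennreal_minus_le_iff)
    finally show ?thesis
      by (simp add: add_left_mono)
  qed simp
qed

lemma nn_integral_cmult_le:
  assumes "c \<ge> 0"
  shows "(\<integral>\<^sup>+x. ennreal c * F x \<partial>M) \<le> ennreal c * integral\<^sup>N M F"
proof (rule nn_integral_le_by_measurable_minorants)
  fix g assume g: "g \<in> borel_measurable M" and le: "\<And>x. x \<in> space M \<Longrightarrow> g x \<le> ennreal c * F x"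
  show "integral\<^sup>N M g \<le> ennreal c * integral\<^sup>N M F"
  proof (cases "c = 0")
    case True
    then have "integral\<^sup>N M g = 0"
      using le by (intro nn_integral_zero') auto
    then show ?thesis
      by simp
  next
    case False
    have inv: "ennreal c * (ennreal (1 / c) * y) = y" "ennreal (1 / c) * (ennreal c * y) = y" for y
      using assms False by (simp_all add: ennreal_mult'[symmetric] mult.assoc[symmetric])
    have "ennreal (1 / c) * g x \<le> F x" if "x \<in> space M" for x
      using mult_left_mono[OF le[OF that], of "ennreal (1 / c)"] inv(2) by simp
    then have "(\<integral>\<^sup>+x. ennreal (1 / c) * g x \<partial>M) \<le> integral\<^sup>N M F"
      by (intro nn_integral_mono)
    then have "ennreal c * (\<integral>\<^sup>+x. ennreal (1 / c) * g x \<partial>M) \<le> ennreal c * integral\<^sup>N M F"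
      by (rule mult_left_mono) simp
    then show ?thesis
      using g by (simp add: nn_integral_cmult inv(1))
  qed
qed

lemma (in prob_space) nn_integral_PiM_case_nat_le:
  "(\<integral>\<^sup>+\<omega>. F \<omega> \<partial>PiM UNIV (\<lambda>_::nat. M))
    \<le> (\<integral>\<^sup>+\<xi>. (\<integral>\<^sup>+\<omega>. F (case_nat \<xi> \<omega>) \<partial>PiM UNIV (\<lambda>_::nat. M)) \<partial>M)"
proof (rule nn_integral_le_by_measurable_minorants)
  interpret S: sequence_space M
    by unfold_locales
  fix g assume g: "g \<in> borel_measurable S.S" and le: "\<And>\<omega>. \<omega> \<in> space S.S \<Longrightarrow> g \<omega> \<le> F \<omega>"
  have case_nat_meas: "(\<lambda>(\<xi>, \<omega>). case_nat \<xi> \<omega>) \<in> measurable (M \<Otimes>\<^sub>M S.S) S.S"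
    by measurable
  have "integral\<^sup>N S.S g = integral\<^sup>N (distr (M \<Otimes>\<^sub>M S.S) S.S (\<lambda>(\<xi>, \<omega>). case_nat \<xi> \<omega>)) g"
    by (simp add: S.PiM_iter)
  also have "\<dots> = (\<integral>\<^sup>+\<xi>. (\<integral>\<^sup>+\<omega>. g (case_nat \<xi> \<omega>) \<partial>S.S) \<partial>M)"
    using g case_nat_meas
    by (simp add: nn_integral_distr S.nn_integral_fst[symmetric] split_beta')
  also have "\<dots> \<le> (\<integral>\<^sup>+\<xi>. (\<integral>\<^sup>+\<omega>. F (case_nat \<xi> \<omega>) \<partial>S.S) \<partial>M)"
    using le by (intro nn_integral_mono)
      (auto simp: space_PiM PiE_iff split: nat.split)
  finally show "integral\<^sup>N S.S g \<le> (\<integral>\<^sup>+\<xi>. (\<integral>\<^sup>+\<omega>. F (case_nat \<xi> \<omega>) \<partial>S.S) \<partial>M)" .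
qed

section \<open>Mirror maps\<close>

locale mirror_map =
  fixes C :: "'a::euclidean_space set" and h :: "'a \<Rightarrow> real"
  assumes convex_C: "convex C"
    and h_has_derivative: "\<And>x. x \<in> interior C \<Longrightarrow> (h has_derivative (\<lambda>v. grad h x \<bullet> v)) (at x)"
    and continuous_on_grad_h: "continuous_on (interior C) (grad h)"
    and strict_convex_h: "strict_convex_on (interior C) h"
    and argmin_unique: "\<And>y. \<exists>!x. x \<in> C \<and> (\<forall>z\<in>C. h x - x \<bullet> y \<le> h z - z \<bullet> y)"
    and argmin_interior: "\<And>y x. x \<in> C \<Longrightarrow> (\<forall>z\<in>C. h x - x \<bullet> y \<le> h z - z \<bullet> y) \<Longrightarrow> x \<in> interior C"
begin

text \<open>This is \<nabla>h*, the inverse of \<nabla>h on the interior of C.\<close>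
definition conj_maximizer :: "'a \<Rightarrow> 'a" where
  "conj_maximizer y = (THE x. x \<in> C \<and> (\<forall>z\<in>C. h x - x \<bullet> y \<le> h z - z \<bullet> y))"

lemma convex_interior_C: "convex (interior C)"
  using convex_C by (rule convex_interior)

lemma h_differentiable: "x \<in> interior C \<Longrightarrow> h differentiable (at x)"
  using h_has_derivative by (auto simp: differentiable_def)

lemma convex_on_h: "convex_on (interior C) h"
proof (rule convex_onI)
  fix t :: real and x y assume "0 < t" "t < 1" "x \<in> interior C" "y \<in> interior C"
  then show "h ((1 - t) *\<^sub>R x + t *\<^sub>R y) \<le> (1 - t) * h x + t * h y"
    using strict_convex_h unfolding strict_convex_on_def
    by (cases "x = y") (auto simp: algebra_simps simp flip: scaleR_add_left intro: less_imp_le)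
qed (rule convex_interior_C)

lemma bregman_h_nonneg: "x \<in> interior C \<Longrightarrow> y \<in> interior C \<Longrightarrow> bregman h x y \<ge> 0"
  by (rule bregman_nonneg[OF convex_on_h convex_interior_C _ _ h_differentiable])

lemma conj_maximizer:
  "conj_maximizer y \<in> C" "z \<in> C \<Longrightarrow> z \<bullet> y - h z \<le> conj_maximizer y \<bullet> y - h (conj_maximizer y)"
  using theI'[OF argmin_unique[of y]] unfolding conj_maximizer_def[symmetric] by force+

lemma conj_maximizer_interior: "conj_maximizer y \<in> interior C"
proof (rule argmin_interior[OF conj_maximizer(1)])
  show "\<forall>z\<in>C. h (conj_maximizer y) - conj_maximizer y \<bullet> y \<le> h z - z \<bullet> y"
    using conj_maximizer(2)[of _ y] by force
qed

lemma conj_on_eq: "conj_on C h y = conj_maximizer y \<bullet> y - h (conj_maximizer y)"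
  unfolding conj_on_def by (rule cSup_eq_maximum) (use conj_maximizer in auto)

lemma conj_on_ge: "z \<in> C \<Longrightarrow> z \<bullet> y - h z \<le> conj_on C h y"
  unfolding conj_on_eq by (rule conj_maximizer)

text \<open>First-order optimality condition at the interior maximizer.\<close>
lemma grad_h_conj_maximizer: "grad h (conj_maximizer y) = y"
proof -
  let ?x = "conj_maximizer y"
  have "((\<lambda>x. h x - x \<bullet> y) has_derivative (\<lambda>v. grad h ?x \<bullet> v - v \<bullet> y)) (at ?x)"
    using h_has_derivative[OF conj_maximizer_interior] by (auto intro!: derivative_eq_intros)
  moreover have "eventually (\<lambda>x. h ?x - ?x \<bullet> y \<le> h x - x \<bullet> y) (at ?x)"
    using eventually_at_topological conj_maximizer_interior conj_maximizer(2) interior_subset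
    by (smt (verit) open_interior subsetD)
  ultimately have "(\<lambda>v. grad h ?x \<bullet> v - v \<bullet> y) = (\<lambda>v. 0)"
    by (rule has_derivative_local_min)
  then have "(grad h ?x - y) \<bullet> (grad h ?x - y) = 0"
    by (metis inner_commute inner_diff_left)
  then show ?thesis
    by simp
qed

lemma grad_h_inj:
  assumes x: "x \<in> interior C" and x': "x' \<in> interior C" and eq: "grad h x = grad h x'"
  shows "x = x'"
proof (rule ccontr)
  assume "x \<noteq> x'"
  define m where "m = (1 - 1/2) *\<^sub>R x + (1/2) *\<^sub>R x'"
  have m: "m \<in> interior C" "m - x = (1/2) *\<^sub>R (x' - x)"
    using convexD_alt[OF convex_interior_C x x', of "1/2"] unfolding m_def
    by (simp_all add: algebra_simps) (metis field_sum_of_halves scaleR_add_left scaleR_one)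
  have strict: "\<forall>u. 0 < u \<and> u < 1 \<longrightarrow> h ((1 - u) *\<^sub>R x + u *\<^sub>R x') < (1 - u) * h x + u * h x'"
    using strict_convex_h x x' \<open>x \<noteq> x'\<close> unfolding strict_convex_on_def by blast
  have "h m < (1 - 1/2) * h x + (1/2) * h x'"
    using spec[OF strict, of "1/2"] unfolding m_def by simp
  moreover have "h x + grad h x \<bullet> (x' - x) \<le> h x'" "h x' + grad h x \<bullet> (x - x') \<le> h x"
    "h x + grad h x \<bullet> (m - x) \<le> h m"
    using convex_on_gradient_inequality[OF convex_on_h convex_interior_C _ _ h_has_derivative]
      x x' m eq by metis+
  ultimately show False
    using m(2) by (simp add: inner_diff_right) argo
qed

lemma conj_maximizer_grad_h: "x \<in> interior C \<Longrightarrow> conj_maximizer (grad h x) = x"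
  using grad_h_inj[OF conj_maximizer_interior _ grad_h_conj_maximizer] by blast

lemma conj_on_grad_h: "x \<in> interior C \<Longrightarrow> conj_on C h (grad h x) = x \<bullet> grad h x - h x"
  by (simp add: conj_on_eq conj_maximizer_grad_h)

lemma continuous_conj_maximizer: "continuous_on UNIV conj_maximizer"
proof -
  have "grad h ` interior C = UNIV"
    by (metis UNIV_eq_I conj_maximizer_interior grad_h_conj_maximizer image_eqI)
  moreover have "continuous_on (grad h ` interior C) conj_maximizer"
    by (rule continuous_on_inverse_open[OF open_interior continuous_on_grad_h])
      (auto simp: conj_maximizer_grad_h)
  ultimately show ?thesis
    by simp
qed

lemma has_derivative_conj_on: "(conj_on C h has_derivative (\<lambda>v. conj_maximizer y \<bullet> v)) (at y)"
  unfolding has_derivative_at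
proof
  show "bounded_linear (\<lambda>v. conj_maximizer y \<bullet> v)"
    by (rule bounded_linear_inner_right)
  let ?R = "\<lambda>k. conj_on C h (y + k) - conj_on C h y - conj_maximizer y \<bullet> k"
  have "0 \<le> ?R k" "?R k \<le> (conj_maximizer (y + k) - conj_maximizer y) \<bullet> k" for k
    using conj_on_ge[OF conj_maximizer(1), of y "y + k"]
      conj_on_ge[OF conj_maximizer(1), of "y + k" y]
    by (simp_all add: conj_on_eq inner_add_right inner_diff_left)
  then have "norm (?R k) \<le> norm (conj_maximizer (y + k) - conj_maximizer y) * norm k" for k
    using norm_cauchy_schwarz[of "conj_maximizer (y + k) - conj_maximizer y" k]
    by (smt (verit) real_norm_def)
  then have bound: "norm (?R k) / norm k \<le> norm (conj_maximizer (y + k) - conj_maximizer y)" for k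
    by (cases "k = 0") (simp_all add: pos_divide_le_eq)
  have "isCont conj_maximizer y"
    using continuous_conj_maximizer by (simp add: continuous_on_eq_continuous_at)
  then have "((\<lambda>k. conj_maximizer (y + k)) \<longlongrightarrow> conj_maximizer y) (at 0)"
    by (simp add: isCont_def LIM_offset_zero)
  then have "((\<lambda>k. norm (conj_maximizer (y + k) - conj_maximizer y)) \<longlongrightarrow> 0) (at 0)"
    by (simp add: tendsto_norm_zero_iff LIM_zero_iff)
  then show "((\<lambda>k. norm (?R k) / norm k) \<longlongrightarrow> 0) (at 0)"
    by (rule Lim_null_comparison[OF always_eventually, rotated]) (use bound in auto)
qed

lemma conj_on_differentiable: "conj_on C h differentiable (at y)"
  using has_derivative_conj_on by (auto simp: differentiable_def)

lemma grad_conj_on: "grad (conj_on C h) y = conj_maximizer y"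
  by (rule grad_eqI[OF has_derivative_conj_on])

lemma borel_measurable_conj_on: "conj_on C h \<in> borel_measurable borel"
  using conj_on_differentiable
  by (intro borel_measurable_continuous_onI differentiable_imp_continuous_on)
    (simp add: differentiable_on_def differentiable_at_withinI)

lemma convex_on_conj_on: "convex_on UNIV (conj_on C h)"
proof (rule convex_onI)
  fix t :: real and a b :: 'a assume "0 < t" "t < 1"
  let ?m = "(1 - t) *\<^sub>R a + t *\<^sub>R b" let ?x = "conj_maximizer ?m"
  have "conj_on C h ?m = (1 - t) * (?x \<bullet> a - h ?x) + t * (?x \<bullet> b - h ?x)"
    by (simp add: conj_on_eq algebra_simps)
  also have "\<dots> \<le> (1 - t) * conj_on C h a + t * conj_on C h b"
    using \<open>0 < t\<close> \<open>t < 1\<close> conj_on_ge[OF conj_maximizer(1)]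
    by (intro add_mono mult_left_mono) auto
  finally show "conj_on C h ?m \<le> (1 - t) * conj_on C h a + t * conj_on C h b" .
qed simp

lemma bregman_conj_on_nonneg: "bregman (conj_on C h) u v \<ge> 0"
  by (rule bregman_nonneg[OF convex_on_conj_on convex_UNIV _ _ conj_on_differentiable]) auto

lemma bregman_conj_on_midpoint:
  "bregman (conj_on C h) ((1/2) *\<^sub>R a + (1/2) *\<^sub>R b) y
    \<le> bregman (conj_on C h) a y / 2 + bregman (conj_on C h) b y / 2"
proof -
  have "conj_on C h ((1 - 1/2) *\<^sub>R a + (1/2) *\<^sub>R b)
      \<le> (1 - 1/2) * conj_on C h a + (1/2) * conj_on C h b"
    by (rule convex_onD[OF convex_on_conj_on]) auto
  then show ?thesis
    by (simp add: bregman_def inner_diff_right inner_add_right field_simps)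
qed

lemma bregman_conj_on_dual:
  "x \<in> interior C \<Longrightarrow> bregman (conj_on C h) u (grad h x) = bregman h x (conj_maximizer u)"
  by (simp add: bregman_def grad_conj_on conj_maximizer_grad_h conj_on_grad_h
      conj_on_eq[of u] grad_h_conj_maximizer algebra_simps inner_commute)

lemma bsgd_step_eq: "bsgd_step C h \<eta> g x = conj_maximizer (grad h x - \<eta> *\<^sub>R g)"
proof -
  have "\<eta> * (g \<bullet> x') + bregman h x' x \<le> \<eta> * (g \<bullet> z) + bregman h z x \<longleftrightarrow>
      h x' - x' \<bullet> (grad h x - \<eta> *\<^sub>R g) \<le> h z - z \<bullet> (grad h x - \<eta> *\<^sub>R g)" for x' z
    by (simp add: bregman_def inner_commute algebra_simps)
  then show ?thesis
    unfolding bsgd_step_def conj_maximizer_def by simp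
qed

section \<open>The one-step inequality\<close>

lemma bregman_conj_on_gradient_gap_le:
  assumes x: "x \<in> interior C" and xs: "xs \<in> interior C"
    and \<phi>_convex: "convex_on (interior C) \<phi>" and \<phi>_smooth: "rel_smooth C L \<phi> h"
    and \<eta>: "\<eta> > 0" "2 * \<eta> * L \<le> 1"
  shows "bregman (conj_on C h) (grad h x - (2 * \<eta>) *\<^sub>R (grad \<phi> x - grad \<phi> xs)) (grad h x)
      \<le> 2 * \<eta> * bregman \<phi> x xs"
proof -
  define a where "a = grad h x - (2 * \<eta>) *\<^sub>R (grad \<phi> x - grad \<phi> xs)"
  define z where "z = conj_maximizer a"
  have z: "z \<in> interior C" "grad h z = a"
    unfolding z_def by (rule conj_maximizer_interior grad_h_conj_maximizer)+
  have "(grad h z - grad h x) \<bullet> (x - z) = 2 * \<eta> * ((grad \<phi> x - grad \<phi> xs) \<bullet> (z - x))"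
    unfolding z(2) a_def by (simp add: algebra_simps)
  then have "bregman h x z = - bregman h z x - 2 * \<eta> * ((grad \<phi> x - grad \<phi> xs) \<bullet> (z - x))"
    using bregman_three_point[of h x x z] bregman_same[of h x] by linarith
  moreover have "2 * \<eta> * bregman \<phi> z xs = 2 * \<eta> * bregman \<phi> z x + 2 * \<eta> * bregman \<phi> x xs
      + 2 * \<eta> * ((grad \<phi> x - grad \<phi> xs) \<bullet> (z - x))"
    using bregman_three_point[of \<phi> z xs x] by (simp add: distrib_left)
  moreover have "2 * \<eta> * bregman \<phi> z x \<le> bregman h z x"
  proof -
    have "bregman \<phi> z x \<le> L * bregman h z x"
      using \<phi>_smooth z(1) x by (auto simp: rel_smooth_def)
    then have "2 * \<eta> * bregman \<phi> z x \<le> (2 * \<eta> * L) * bregman h z x"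
      using \<eta> by (simp add: mult_left_mono)
    also have "\<dots> \<le> bregman h z x"
      using mult_right_mono[OF \<eta>(2) bregman_h_nonneg[OF z(1) x]] by simp
    finally show ?thesis .
  qed
  moreover have "bregman \<phi> z xs \<ge> 0"
    using \<phi>_smooth xs by (intro bregman_nonneg[OF \<phi>_convex convex_interior_C z(1) xs])
      (auto simp: rel_smooth_def)
  then have "2 * \<eta> * bregman \<phi> z xs \<ge> 0"
    using \<eta> by simp
  ultimately show ?thesis
    unfolding a_def[symmetric] bregman_conj_on_dual[OF x] z_def[symmetric] by linarith
qed

lemma mirror_step_inequality:
  assumes x: "x \<in> interior C" and xs: "xs \<in> interior C"
    and \<phi>_convex: "convex_on (interior C) \<phi>" and \<phi>_smooth: "rel_smooth C L \<phi> h"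
    and \<eta>: "\<eta> > 0" "2 * \<eta> * L \<le> 1"
  shows "\<eta> * (bregman \<phi> xs x + grad \<phi> xs \<bullet> (x - xs))
      \<le> bregman h xs x - bregman h xs (bsgd_step C h \<eta> (grad \<phi> x) x)
         + bregman (conj_on C h) (grad h x - (2 * \<eta>) *\<^sub>R grad \<phi> xs) (grad h x) / 2"
proof -
  define g v where "g = grad \<phi> x" and "v = grad \<phi> xs"
  define x' where "x' = bsgd_step C h \<eta> g x"
  let ?D = "\<lambda>u. bregman (conj_on C h) u (grad h x)"
  have "grad h x' = grad h x - \<eta> *\<^sub>R g"
    unfolding x'_def bsgd_step_eq by (rule grad_h_conj_maximizer)
  then have "\<eta> * (g \<bullet> (x - xs)) = bregman h xs x - bregman h xs x' + bregman h x x'"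
    using bregman_three_point[of h xs x' x]
    by (simp add: inner_diff_left inner_diff_right right_diff_distrib)
  moreover have "g \<bullet> (x - xs) = bregman \<phi> xs x + bregman \<phi> x xs + v \<bullet> (x - xs)"
    using bregman_three_point[of \<phi> xs xs x] unfolding g_def v_def
    by (simp add: bregman_def inner_diff_left inner_diff_right)
  moreover have "bregman h x x'
      \<le> ?D (grad h x - (2 * \<eta>) *\<^sub>R (g - v)) / 2 + ?D (grad h x - (2 * \<eta>) *\<^sub>R v) / 2"
  proof -
    have "grad h x - \<eta> *\<^sub>R g
        = (1/2) *\<^sub>R (grad h x - (2 * \<eta>) *\<^sub>R (g - v)) + (1/2) *\<^sub>R (grad h x - (2 * \<eta>) *\<^sub>R v)"
      by (simp add: algebra_simps) (metis field_sum_of_halves scaleR_add_left scaleR_one)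
    then show ?thesis
      using bregman_conj_on_midpoint bregman_conj_on_dual[OF x]
      unfolding x'_def bsgd_step_eq by metis
  qed
  moreover have "?D (grad h x - (2 * \<eta>) *\<^sub>R (g - v)) \<le> 2 * \<eta> * bregman \<phi> x xs"
    unfolding g_def v_def by (rule bregman_conj_on_gradient_gap_le[OF assms])
  ultimately show ?thesis
    unfolding x'_def g_def v_def by (simp add: distrib_left)
qed

end

section \<open>Bregman stochastic gradient descent\<close>

lemma bsgd_case_nat:
  "bsgd C h \<eta> F z (case_nat \<xi> \<omega>) (Suc t) = bsgd C h \<eta> F (bsgd_step C h \<eta> (grad (F \<xi>) z) z) \<omega> t"
  by (induction t) auto

lemma bsgd_cong_prefix:
  "(\<And>i. i < t \<Longrightarrow> \<omega> i = \<omega>' i) \<Longrightarrow> bsgd C h \<eta> F z \<omega> t = bsgd C h \<eta> F z \<omega>' t"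
  by (induction t) auto

locale bsgd_problem = mirror_map C h for C :: "'a::euclidean_space set" and h +
  fixes P :: "'b measure" and F :: "'b \<Rightarrow> 'a \<Rightarrow> real" and f :: "'a \<Rightarrow> real"
    and L \<eta> \<sigma>2 :: real and xs x0 :: 'a
  assumes prob_P: "prob_space P"
    and F_convex: "\<And>\<xi>. \<xi> \<in> space P \<Longrightarrow> convex_on (interior C) (F \<xi>)"
    and F_smooth: "\<And>\<xi>. \<xi> \<in> space P \<Longrightarrow> rel_smooth C L (F \<xi>) h"
    and F_integrable: "\<And>x. x \<in> interior C \<Longrightarrow> integrable P (\<lambda>\<xi>. F \<xi> x)"
    and f_mean: "\<And>x. x \<in> interior C \<Longrightarrow> f x = (\<integral>\<xi>. F \<xi> x \<partial>P)"
    and f_smooth: "rel_smooth C L f h"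
    and xs: "xs \<in> interior C" "grad f xs = 0"
    and x0: "x0 \<in> interior C"
    and \<eta>: "0 < \<eta>" "2 * \<eta> * L \<le> 1"
    and \<sigma>2: "\<sigma>2 \<ge> 0"
    and noise: "\<And>t \<omega>. \<omega> \<in> space (PiM UNIV (\<lambda>_::nat. P)) \<Longrightarrow> ennreal \<sigma>2 \<ge> ennreal (1 / (2 * \<eta>\<^sup>2)) *
          (\<integral>\<^sup>+ \<xi>. ennreal (bregman (conj_on C h)
              (grad h (bsgd C h \<eta> F x0 \<omega> t) - (2 * \<eta>) *\<^sub>R grad (F \<xi>) xs)
              (grad h (bsgd C h \<eta> F x0 \<omega> t))) \<partial>P)"
begin

abbreviation S :: "(nat \<Rightarrow> 'b) measure" where
  "S \<equiv> PiM UNIV (\<lambda>_. P)"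

abbreviation iterate :: "'a \<Rightarrow> (nat \<Rightarrow> 'b) \<Rightarrow> nat \<Rightarrow> 'a" where
  "iterate \<equiv> bsgd C h \<eta> F"

text \<open>The noise assumption only controls points on actual trajectories from x0.\<close>
definition reachable :: "'a set" where
  "reachable = {iterate x0 \<omega> t | \<omega> t. \<omega> \<in> space S}"

definition noise_term :: "'a \<Rightarrow> 'b \<Rightarrow> real" where
  "noise_term z \<xi> = bregman (conj_on C h) (grad h z - (2 * \<eta>) *\<^sub>R grad (F \<xi>) xs) (grad h z)"

definition lyapunov :: "nat \<Rightarrow> 'a \<Rightarrow> (nat \<Rightarrow> 'b) \<Rightarrow> real" where
  "lyapunov T z \<omega> = \<eta> * (\<Sum>t<T. bregman f xs (iterate z \<omega> t)) + bregman h xs (iterate z \<omega> T)"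

lemma prob_space_S: "prob_space S"
  using prob_P by (intro prob_space_PiM) auto

lemma F_differentiable: "\<xi> \<in> space P \<Longrightarrow> x \<in> interior C \<Longrightarrow> F \<xi> differentiable (at x)"
  using F_smooth by (auto simp: rel_smooth_def)

lemma f_differentiable: "x \<in> interior C \<Longrightarrow> f differentiable (at x)"
  using f_smooth by (auto simp: rel_smooth_def)

lemma convex_on_f: "convex_on (interior C) f"
proof (rule convex_onI)
  fix t :: real and x y assume t: "0 < t" "t < 1" and xy: "x \<in> interior C" "y \<in> interior C"
  then have m: "(1 - t) *\<^sub>R x + t *\<^sub>R y \<in> interior C"
    using convex_interior_C by (intro convexD) auto
  have "(\<integral>\<xi>. F \<xi> ((1 - t) *\<^sub>R x + t *\<^sub>R y) \<partial>P) \<le> (\<integral>\<xi>. (1 - t) * F \<xi> x + t * F \<xi> y \<partial>P)"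
    using F_integrable xy t m by (intro integral_mono) (auto intro!: convex_onD[OF F_convex])
  then show "f ((1 - t) *\<^sub>R x + t *\<^sub>R y) \<le> (1 - t) * f x + t * f y"
    using F_integrable f_mean xy m by simp
qed (rule convex_interior_C)

lemma bregman_f_nonneg: "x \<in> interior C \<Longrightarrow> y \<in> interior C \<Longrightarrow> bregman f x y \<ge> 0"
  by (rule bregman_nonneg[OF convex_on_f convex_interior_C _ _ f_differentiable])

lemma integral_grad_F_inner:
  "x \<in> interior C \<Longrightarrow>
    integrable P (\<lambda>\<xi>. grad (F \<xi>) x \<bullet> d) \<and> (\<integral>\<xi>. grad (F \<xi>) x \<bullet> d \<partial>P) = grad f x \<bullet> d"
  by (rule integral_grad_inner[OF open_interior convex_interior_C _ F_convex F_differentiable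
        F_integrable f_mean f_differentiable])

lemma borel_measurable_grad_F: "x \<in> interior C \<Longrightarrow> (\<lambda>\<xi>. grad (F \<xi>) x) \<in> borel_measurable P"
  using integral_grad_F_inner by (subst borel_measurable_euclidean_space) blast

lemma integral_bregman_F:
  assumes z: "z \<in> interior C"
  shows "integrable P (\<lambda>\<xi>. bregman (F \<xi>) xs z + grad (F \<xi>) xs \<bullet> (z - xs))"
    and "(\<integral>\<xi>. bregman (F \<xi>) xs z + grad (F \<xi>) xs \<bullet> (z - xs) \<partial>P) = bregman f xs z"
  using integral_grad_F_inner[OF z, of "xs - z"] integral_grad_F_inner[OF xs(1), of "z - xs"]
    F_integrable[OF z] F_integrable[OF xs(1)] f_mean[OF z] f_mean[OF xs(1)] xs(2)
  by (simp_all add: bregman_def)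

lemma iterate_interior: "z \<in> interior C \<Longrightarrow> iterate z \<omega> t \<in> interior C"
  by (induction t) (auto simp: bsgd_step_eq conj_maximizer_interior)

lemma reachable_interior: "z \<in> reachable \<Longrightarrow> z \<in> interior C"
  unfolding reachable_def using iterate_interior x0 by blast

lemma x0_reachable: "x0 \<in> reachable"
proof -
  obtain \<omega> where "\<omega> \<in> space S"
    using prob_space.not_empty[OF prob_space_S] by blast
  then show ?thesis
    unfolding reachable_def by (intro CollectI exI[of _ \<omega>] exI[of _ 0]) simp
qed

lemma reachable_step:
  assumes z: "z \<in> reachable" and \<xi>: "\<xi> \<in> space P"
  shows "bsgd_step C h \<eta> (grad (F \<xi>) z) z \<in> reachable"
proof -
  obtain \<omega> t where \<omega>: "\<omega> \<in> space S" "z = iterate x0 \<omega> t"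
    using z unfolding reachable_def by blast
  then have "iterate x0 (fun_upd \<omega> t \<xi>) t = z"
    using bsgd_cong_prefix[of t "fun_upd \<omega> t \<xi>" \<omega>] by simp
  then have "bsgd_step C h \<eta> (grad (F \<xi>) z) z = iterate x0 (fun_upd \<omega> t \<xi>) (Suc t)"
    by simp
  moreover have "fun_upd \<omega> t \<xi> \<in> space S"
    using \<omega>(1) \<xi> by (auto simp: space_PiM PiE_iff)
  ultimately show ?thesis
    unfolding reachable_def by blast
qed

lemma borel_measurable_noise_term: "z \<in> interior C \<Longrightarrow> noise_term z \<in> borel_measurable P"
  unfolding noise_term_def bregman_def grad_conj_on
  using borel_measurable_grad_F[OF xs(1)] borel_measurable_conj_on by measurable

lemma noise_term_integral:
  assumes z: "z \<in> reachable"
  shows "integrable P (noise_term z)" "(\<integral>\<xi>. noise_term z \<xi> \<partial>P) \<le> 2 * \<eta>\<^sup>2 * \<sigma>2"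
proof -
  let ?I = "\<integral>\<^sup>+\<xi>. ennreal (noise_term z \<xi>) \<partial>P"
  have "ennreal (1 / (2 * \<eta>\<^sup>2)) * ?I \<le> ennreal \<sigma>2"
    using noise z unfolding reachable_def noise_term_def by blast
  then have "ennreal (2 * \<eta>\<^sup>2) * (ennreal (1 / (2 * \<eta>\<^sup>2)) * ?I) \<le> ennreal (2 * \<eta>\<^sup>2) * ennreal \<sigma>2"
    by (rule mult_left_mono) simp
  then have I: "?I \<le> ennreal (2 * \<eta>\<^sup>2 * \<sigma>2)"
    using \<eta> by (simp add: mult.assoc[symmetric] ennreal_mult'[symmetric])
  have meas: "noise_term z \<in> borel_measurable P"
    using borel_measurable_noise_term reachable_interior z by blast
  have nonneg: "noise_term z \<xi> \<ge> 0" for \<xi>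
    unfolding noise_term_def by (rule bregman_conj_on_nonneg)
  show int: "integrable P (noise_term z)"
    using I nonneg by (intro integrableI_nonneg[OF meas]) (auto simp: top_unique less_top[symmetric])
  have "ennreal (\<integral>\<xi>. noise_term z \<xi> \<partial>P) = ?I"
    using int nonneg by (intro nn_integral_eq_integral[symmetric]) auto
  then have "ennreal (\<integral>\<xi>. noise_term z \<xi> \<partial>P) \<le> ennreal (2 * \<eta>\<^sup>2 * \<sigma>2)"
    using I by simp
  then show "(\<integral>\<xi>. noise_term z \<xi> \<partial>P) \<le> 2 * \<eta>\<^sup>2 * \<sigma>2"
    using \<sigma>2 by simp
qed

lemma expected_step:
  assumes z: "z \<in> reachable"
  shows "(\<integral>\<^sup>+\<xi>. ennreal (\<eta> * bregman f xs z + bregman h xs (bsgd_step C h \<eta> (grad (F \<xi>) z) z)) \<partial>P)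
    \<le> ennreal (bregman h xs z + \<eta>\<^sup>2 * \<sigma>2)"
proof -
  interpret P: prob_space P
    by (rule prob_P)
  have z_int: "z \<in> interior C"
    using reachable_interior z by blast
  define A where "A \<xi> = bregman (F \<xi>) xs z + grad (F \<xi>) xs \<bullet> (z - xs)" for \<xi>
  have A: "integrable P A" "(\<integral>\<xi>. A \<xi> \<partial>P) = bregman f xs z"
    unfolding A_def using integral_bregman_F[OF z_int] by blast+
  define R where "R \<xi> = \<eta> * bregman f xs z + bregman h xs z - \<eta> * A \<xi> + noise_term z \<xi> / 2" for \<xi>
  have step: "\<eta> * bregman f xs z + bregman h xs (bsgd_step C h \<eta> (grad (F \<xi>) z) z) \<le> R \<xi>"
    if "\<xi> \<in> space P" for \<xi>
    using mirror_step_inequality[OF z_int xs(1) F_convex[OF that] F_smooth[OF that] \<eta>]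
    unfolding R_def A_def noise_term_def by linarith
  have lhs_nonneg: "\<eta> * bregman f xs z + bregman h xs (bsgd_step C h \<eta> (grad (F \<xi>) z) z) \<ge> 0" for \<xi>
    using \<eta> bregman_f_nonneg[OF xs(1) z_int] bregman_h_nonneg[OF xs(1)]
    by (simp add: bsgd_step_eq conj_maximizer_interior)
  have R_int: "integrable P R"
    unfolding R_def using A noise_term_integral[OF z] by auto
  have "(\<integral>\<xi>. R \<xi> \<partial>P) = bregman h xs z + (\<integral>\<xi>. noise_term z \<xi> \<partial>P) / 2"
    unfolding R_def using A noise_term_integral[OF z] by (simp add: P.prob_space)
  also have "\<dots> \<le> bregman h xs z + \<eta>\<^sup>2 * \<sigma>2"
    using noise_term_integral[OF z] by simp
  finally have R_le: "(\<integral>\<xi>. R \<xi> \<partial>P) \<le> bregman h xs z + \<eta>\<^sup>2 * \<sigma>2" .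
  have "(\<integral>\<^sup>+\<xi>. ennreal (\<eta> * bregman f xs z + bregman h xs (bsgd_step C h \<eta> (grad (F \<xi>) z) z)) \<partial>P)
      \<le> (\<integral>\<^sup>+\<xi>. ennreal (R \<xi>) \<partial>P)"
    using step by (intro nn_integral_mono ennreal_leI)
  also have "\<dots> = ennreal (\<integral>\<xi>. R \<xi> \<partial>P)"
    using R_int step lhs_nonneg by (intro nn_integral_eq_integral AE_I2) (auto intro: order_trans)
  also have "\<dots> \<le> ennreal (bregman h xs z + \<eta>\<^sup>2 * \<sigma>2)"
    using R_le by (rule ennreal_leI)
  finally show ?thesis .
qed

lemma lyapunov_nonneg: "z \<in> interior C \<Longrightarrow> lyapunov T z \<omega> \<ge> 0"
  unfolding lyapunov_def using \<eta> bregman_f_nonneg bregman_h_nonneg xs(1) iterate_interior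
  by (intro add_nonneg_nonneg mult_nonneg_nonneg sum_nonneg) auto

lemma lyapunov_case_nat:
  "lyapunov (Suc T) z (case_nat \<xi> \<omega>)
    = \<eta> * bregman f xs z + lyapunov T (bsgd_step C h \<eta> (grad (F \<xi>) z) z) \<omega>"
  unfolding lyapunov_def sum.lessThan_Suc_shift bsgd_case_nat by (simp add: algebra_simps)

lemma expected_lyapunov_le:
  "z \<in> reachable \<Longrightarrow> (\<integral>\<^sup>+\<omega>. ennreal (lyapunov T z \<omega>) \<partial>S) \<le> ennreal (bregman h xs z + T * \<eta>\<^sup>2 * \<sigma>2)"
proof (induction T arbitrary: z)
  case 0
  then show ?case
    by (simp add: lyapunov_def prob_space.emeasure_space_1[OF prob_space_S])
next
  case (Suc T)
  interpret P: prob_space P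
    by (rule prob_P)
  let ?z1 = "\<lambda>\<xi>. bsgd_step C h \<eta> (grad (F \<xi>) z) z" and ?c = "\<eta> * bregman f xs z"
  have z1: "?z1 \<xi> \<in> interior C" for \<xi>
    by (simp add: bsgd_step_eq conj_maximizer_interior)
  have c: "?c \<ge> 0"
    using \<eta> bregman_f_nonneg[OF xs(1) reachable_interior[OF Suc.prems]] by simp
  have accumulated_noise_nonneg: "T * \<eta>\<^sup>2 * \<sigma>2 \<ge> 0"
    using \<sigma>2 by simp
  have "(\<integral>\<^sup>+\<omega>. ennreal (lyapunov (Suc T) z \<omega>) \<partial>S)
      \<le> (\<integral>\<^sup>+\<xi>. (\<integral>\<^sup>+\<omega>. ennreal (lyapunov (Suc T) z (case_nat \<xi> \<omega>)) \<partial>S) \<partial>P)"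
    by (rule P.nn_integral_PiM_case_nat_le)
  also have "\<dots> = (\<integral>\<^sup>+\<xi>. (\<integral>\<^sup>+\<omega>. ennreal ?c + ennreal (lyapunov T (?z1 \<xi>) \<omega>) \<partial>S) \<partial>P)"
    using c lyapunov_nonneg[OF z1] by (simp add: lyapunov_case_nat)
  also have "\<dots> \<le> (\<integral>\<^sup>+\<xi>. ennreal ?c + ennreal (bregman h xs (?z1 \<xi>) + T * \<eta>\<^sup>2 * \<sigma>2) \<partial>P)"
  proof (rule nn_integral_mono)
    fix \<xi> assume "\<xi> \<in> space P"
    have "(\<integral>\<^sup>+\<omega>. ennreal ?c + ennreal (lyapunov T (?z1 \<xi>) \<omega>) \<partial>S)
        \<le> ennreal ?c + (\<integral>\<^sup>+\<omega>. ennreal (lyapunov T (?z1 \<xi>) \<omega>) \<partial>S)"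
      by (rule prob_space.nn_integral_add_const_le[OF prob_space_S])
    also have "\<dots> \<le> ennreal ?c + ennreal (bregman h xs (?z1 \<xi>) + T * \<eta>\<^sup>2 * \<sigma>2)"
      using Suc.IH[OF reachable_step[OF Suc.prems \<open>\<xi> \<in> space P\<close>]] by (rule add_left_mono)
    finally show "(\<integral>\<^sup>+\<omega>. ennreal ?c + ennreal (lyapunov T (?z1 \<xi>) \<omega>) \<partial>S)
        \<le> ennreal ?c + ennreal (bregman h xs (?z1 \<xi>) + T * \<eta>\<^sup>2 * \<sigma>2)" .
  qed
  also have "\<dots> = (\<integral>\<^sup>+\<xi>. ennreal (T * \<eta>\<^sup>2 * \<sigma>2) + ennreal (?c + bregman h xs (?z1 \<xi>)) \<partial>P)"
    using c accumulated_noise_nonneg bregman_h_nonneg[OF xs(1) z1] by (simp add: add_ac)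
  also have "\<dots> \<le> ennreal (T * \<eta>\<^sup>2 * \<sigma>2) + (\<integral>\<^sup>+\<xi>. ennreal (?c + bregman h xs (?z1 \<xi>)) \<partial>P)"
    by (rule P.nn_integral_add_const_le)
  also have "\<dots> \<le> ennreal (T * \<eta>\<^sup>2 * \<sigma>2) + ennreal (bregman h xs z + \<eta>\<^sup>2 * \<sigma>2)"
    using expected_step[OF Suc.prems] by (rule add_left_mono)
  also have "\<dots> = ennreal (T * \<eta>\<^sup>2 * \<sigma>2 + (bregman h xs z + \<eta>\<^sup>2 * \<sigma>2))"
    using accumulated_noise_nonneg \<sigma>2 bregman_h_nonneg[OF xs(1) reachable_interior[OF Suc.prems]]
    by (intro ennreal_plus[symmetric]) auto
  also have "\<dots> = ennreal (bregman h xs z + Suc T * \<eta>\<^sup>2 * \<sigma>2)"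
    by (simp add: algebra_simps)
  finally show ?case .
qed

text \<open>The sum in the bound has T + 1 terms; the last one is absorbed by D_h(x*, x_T),
  since \<eta>D_f \<le> \<eta>L D_h \<le> D_h.\<close>
lemma expected_average_le:
  assumes T: "T \<ge> 1"
  shows "(\<integral>\<^sup>+\<omega>. ennreal ((1 / real T) * (\<Sum>t\<in>{0..T}. bregman f xs (iterate x0 \<omega> t))) \<partial>S)
    \<le> ennreal (bregman h xs x0 / (\<eta> * real T) + \<eta> * \<sigma>2)"
proof -
  have T_pos: "real T > 0"
    using T by simp
  have pointwise: "(1 / real T) * (\<Sum>t\<in>{0..T}. bregman f xs (iterate x0 \<omega> t))
      \<le> (1 / (\<eta> * real T)) * lyapunov T x0 \<omega>" for \<omega>
  proof -
    let ?x = "iterate x0 \<omega> T"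
    have x: "?x \<in> interior C"
      using iterate_interior x0 by blast
    have "\<eta> * bregman f xs ?x \<le> \<eta> * (L * bregman h xs ?x)"
      using f_smooth xs(1) x \<eta> by (intro mult_left_mono) (auto simp: rel_smooth_def)
    also have "\<dots> \<le> bregman h xs ?x"
      using \<eta> mult_right_mono[of "\<eta> * L" 1, OF _ bregman_h_nonneg[OF xs(1) x]] by simp
    finally have "\<eta> * (\<Sum>t\<in>{0..T}. bregman f xs (iterate x0 \<omega> t)) \<le> lyapunov T x0 \<omega>"
      by (simp add: lyapunov_def atLeast0AtMost lessThan_Suc_atMost[symmetric] distrib_left)
    then show ?thesis
      using \<eta> T_pos by (simp add: field_simps)
  qed
  have "(\<integral>\<^sup>+\<omega>. ennreal ((1 / real T) * (\<Sum>t\<in>{0..T}. bregman f xs (iterate x0 \<omega> t))) \<partial>S)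
      \<le> (\<integral>\<^sup>+\<omega>. ennreal (1 / (\<eta> * real T)) * ennreal (lyapunov T x0 \<omega>) \<partial>S)"
    using pointwise \<eta> T_pos by (intro nn_integral_mono) (simp add: ennreal_mult'[symmetric] ennreal_leI)
  also have "\<dots> \<le> ennreal (1 / (\<eta> * real T)) * (\<integral>\<^sup>+\<omega>. ennreal (lyapunov T x0 \<omega>) \<partial>S)"
    using \<eta> T_pos by (intro nn_integral_cmult_le) simp
  also have "\<dots> \<le> ennreal (1 / (\<eta> * real T)) * ennreal (bregman h xs x0 + T * \<eta>\<^sup>2 * \<sigma>2)"
    using expected_lyapunov_le[OF x0_reachable] by (rule mult_left_mono) simp
  also have "\<dots> = ennreal (bregman h xs x0 / (\<eta> * real T) + \<eta> * \<sigma>2)"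
    using \<eta> T_pos by (simp add: ennreal_mult'[symmetric] field_simps power2_eq_square)
  finally show ?thesis .
qed

end

theorem theorem3:
  fixes C :: "'a::euclidean_space set"
    and h :: "'a \<Rightarrow> real"
    and P :: "'b measure"
    and fx :: "'b \<Rightarrow> 'a \<Rightarrow> real"
    and f :: "'a \<Rightarrow> real"
    and L \<eta> \<sigma>2 :: real
    and xstar x0 :: 'a
    and T :: nat
  assumes C: "closed C" "convex C"
    and h_C2: "\<exists>H :: 'a \<Rightarrow> 'a \<Rightarrow>\<^sub>L 'a.
          (\<forall>x\<in>interior C. (h has_derivative (\<lambda>v. grad h x \<bullet> v)) (at x)
                          \<and> (grad h has_derivative blinfun_apply (H x)) (at x))
          \<and> continuous_on (interior C) H"
    and h_strict: "strict_convex_on (interior C) h"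
    and h_unique: "\<forall>y. \<exists>!x. x \<in> C \<and> (\<forall>z\<in>C. h x - x \<bullet> y \<le> h z - z \<bullet> y)"
    and h_interior: "\<forall>y x. x \<in> C \<and> (\<forall>z\<in>C. h x - x \<bullet> y \<le> h z - z \<bullet> y) \<longrightarrow> x \<in> interior C"
    and P: "prob_space P"
    and fx_convex: "\<forall>\<xi>\<in>space P. convex_on (interior C) (fx \<xi>)"
    and fx_smooth: "\<forall>\<xi>\<in>space P. rel_smooth C L (fx \<xi>) h"
    and fx_integrable: "\<forall>x\<in>interior C. integrable P (\<lambda>\<xi>. fx \<xi> x)"
    and f_mean: "\<forall>x\<in>interior C. f x = (\<integral>\<xi>. fx \<xi> x \<partial>P)"
    and f_smooth: "rel_smooth C L f h"
    and L_pos: "L > 0"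
    and xstar: "xstar \<in> interior C" "\<forall>x\<in>interior C. f xstar \<le> f x" "grad f xstar = 0"
    and x0: "x0 \<in> interior C"
    and eta: "0 < \<eta>" "\<eta> \<le> 1 / (2 * L)"
    and sigma: "\<sigma>2 \<ge> 0"
    and noise: "\<forall>t. \<forall>\<omega>\<in>space (PiM UNIV (\<lambda>_::nat. P)). ennreal \<sigma>2 \<ge> ennreal (1 / (2 * \<eta>\<^sup>2)) *
          (\<integral>\<^sup>+ \<xi>. ennreal (bregman (conj_on C h)
              (grad h (bsgd C h \<eta> fx x0 \<omega> t) - (2 * \<eta>) *\<^sub>R grad (fx \<xi>) xstar)
              (grad h (bsgd C h \<eta> fx x0 \<omega> t))) \<partial>P)"
    and T: "T \<ge> 1"
  shows "(\<integral>\<^sup>+ \<omega>. ennreal ((1 / real T) *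
            (\<Sum>t\<in>{0..T}. bregman f xstar (bsgd C h \<eta> fx x0 \<omega> t)))
          \<partial>(PiM UNIV (\<lambda>_::nat. P)))
         \<le> ennreal (bregman h xstar x0 / (\<eta> * real T) + \<eta> * \<sigma>2)"
proof -
  have h_der: "\<forall>x\<in>interior C. (h has_derivative (\<lambda>v. grad h x \<bullet> v)) (at x)"
    and "continuous_on (interior C) (grad h)"
    using h_C2 by (auto intro!: continuous_at_imp_continuous_on dest: has_derivative_continuous)
  then have mirror: "mirror_map C h"
    using C(2) h_strict h_unique h_interior by unfold_locales blast+
  have "2 * \<eta> * L \<le> 1"
    using mult_right_mono[OF eta(2), of "2 * L"] L_pos by (simp add: ac_simps)
  then interpret bsgd_problem C h P fx f L \<eta> \<sigma>2 xstar x0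
    using P fx_convex fx_smooth fx_integrable f_mean f_smooth xstar(1,3) x0 eta(1) sigma noise
    by (intro bsgd_problem.intro[OF mirror] bsgd_problem_axioms.intro) auto
  show ?thesis
    using expected_average_le[OF T] .
qed

end
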